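(* Consider the partial-block protocol described in the context, on a finite set of agents $A$ with a connected undirected connectivity graph $G=(A,E)$, and suppose the block length satisfies $L\le |A|$. Then a deadlock never occurs: for every epoch $t$ it is not the case that $D(i)$ holds for all $i\in A$.
   Context: Let $A$ be a finite set of agents (agent IDs) and $G=(A,E)$ a connected undirected graph; $\Gamma_i$ denotes the set of neighbors of $i$. Fix an integer $L\ge 1$ (block length). Each agent $i$ maintains a partial block $pb_i\subseteq A$ (a set of agent IDs). The system runs in epochs $t=0,1,2,\dots$; $pb_i^{(t)}$ is agent $i$'s partial block at the start of epoch $t$. In each epoch: (C1) every agent $i$ with $i\notin pb_i$ adds $i$ to $pb_i$; (C2) every agent $i$ sends its $pb_i$ to every neighbor $j\in\Gamma_i$. When an agent $i$ receives a partial block $P$ (from a neighbor or via a direct message) it applies the rule: (R1) if $|P\setminus\{i\}|>|pb_i\setminus\{i\}|$, agent $i$ sets $pb_i:=P$; (R2) otherwise, if $|P\setminus\{i\}|=|pb_i\setminus\{i\}|$ and $P\neq pb_i$, agent $i$ sends its current $pb_i$ directly to every agent in $P\setminus pb_i$, each of which processes it by the same rule; (R3) otherwise the received block is discarded. All received partial blocks are assumed to pass all validity and similarity checks. For an agent $i$ and epoch $t$, the predicate $D(i)$ means: $pb_i^{(t)}=pb_i^{(t+1)}$ and $|pb_i^{(t)}|<L$. A deadlock at epoch $t$ means that $D(i)$ holds for all $i\in A$. *)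

theory Defs
  imports Main "HOL-Library.Multiset"
begin

text \<open>Agents have type 'a; the agent set is a finite set A,
  the graph is given by an edge relation E (undirected: symmetric), neighbours of i
  are the j with (i,j) in E. A configuration of all partial blocks is pb :: 'a => 'a set.
  Pending messages are a multiset of pairs (recipient, block).\<close>

definition neighbours :: "('a \<times> 'a) set \<Rightarrow> 'a \<Rightarrow> 'a set" where
  "neighbours E i = {j. (i, j) \<in> E}"

text \<open>Agent i receives partial block P (rules R1, R2, R3). Result: new configuration
  and newly generated direct messages.\<close>
definition receive ::
  "'a \<Rightarrow> 'a set \<Rightarrow> ('a \<Rightarrow> 'a set) \<Rightarrow> ('a \<Rightarrow> 'a set) \<times> ('a \<times> 'a set) multiset" where
  "receive i P pb =
     (if card (P - {i}) > card (pb i - {i}) then (pb(i := P), {#})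
      else if card (P - {i}) = card (pb i - {i}) \<and> P \<noteq> pb i
        then (pb, image_mset (\<lambda>k. (k, pb i)) (mset_set (P - pb i)))
      else (pb, {#}))"

definition msg_step ::
  "('a \<Rightarrow> 'a set) \<times> ('a \<times> 'a set) multiset \<Rightarrow> ('a \<Rightarrow> 'a set) \<times> ('a \<times> 'a set) multiset \<Rightarrow> bool" where
  "msg_step c c' =
     (\<exists>k P. (k, P) \<in># snd c \<and>
        c' = (fst (receive k P (fst c)), (snd c - {#(k, P)#}) + snd (receive k P (fst c))))"

definition after_C1 :: "'a set \<Rightarrow> ('a \<Rightarrow> 'a set) \<Rightarrow> 'a \<Rightarrow> 'a set" where
  "after_C1 A pb = (\<lambda>i. if i \<in> A \<and> i \<notin> pb i then insert i (pb i) else pb i)"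

definition C2_msgs :: "'a set \<Rightarrow> ('a \<times> 'a) set \<Rightarrow> ('a \<Rightarrow> 'a set) \<Rightarrow> ('a \<times> 'a set) multiset" where
  "C2_msgs A E pb = (\<Sum>i\<in>A. image_mset (\<lambda>j. (j, pb i)) (mset_set (neighbours E i)))"

text \<open>One epoch: C1, then C2, then all messages (including cascaded direct messages)
  are processed in some order until none remain; pb' is the configuration at the start
  of the next epoch.\<close>
definition epoch :: "'a set \<Rightarrow> ('a \<times> 'a) set \<Rightarrow> ('a \<Rightarrow> 'a set) \<Rightarrow> ('a \<Rightarrow> 'a set) \<Rightarrow> bool" where
  "epoch A E pb pb' =
     msg_step\<^sup>*\<^sup>* (after_C1 A pb, C2_msgs A E (after_C1 A pb)) (pb', {#})"

text \<open>An execution: pbs t is the configuration at the start of epoch t.\<close>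
definition execution :: "'a set \<Rightarrow> ('a \<times> 'a) set \<Rightarrow> (nat \<Rightarrow> 'a \<Rightarrow> 'a set) \<Rightarrow> bool" where
  "execution A E pbs = ((\<forall>i\<in>A. pbs 0 i \<subseteq> A) \<and> (\<forall>t. epoch A E (pbs t) (pbs (Suc t))))"

definition D :: "nat \<Rightarrow> (nat \<Rightarrow> 'a \<Rightarrow> 'a set) \<Rightarrow> nat \<Rightarrow> 'a \<Rightarrow> bool" where
  "D L pbs t i = (pbs t i = pbs (Suc t) i \<and> card (pbs t i) < L)"

definition deadlock :: "'a set \<Rightarrow> nat \<Rightarrow> (nat \<Rightarrow> 'a \<Rightarrow> 'a set) \<Rightarrow> nat \<Rightarrow> bool" where
  "deadlock A L pbs t = (\<forall>i\<in>A. D L pbs t i)"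

definition connected_undirected :: "'a set \<Rightarrow> ('a \<times> 'a) set \<Rightarrow> bool" where
  "connected_undirected A E =
     (E \<subseteq> A \<times> A \<and> sym E \<and> (\<forall>i\<in>A. \<forall>j\<in>A. (i, j) \<in> E\<^sup>*))"

end

theory Submission
  imports Defs
begin

text \<open>Along the message run of one epoch the quantity card (pb i - {i}) never decreases,
  and strictly increases whenever pb i changes. In a deadlocked epoch it is the same at the
  start and at the end, so no block changes during the whole run: every message that is
  ever pending is absorbed by rule R2 or R3. Absorption of the step-C2 messages forces equal
  block sizes, and then equal blocks, at the two ends of every edge (a mismatch would make
  R2 send a block to an agent outside it, which that agent would have to adopt by R1).
  By connectivity all blocks coincide; as i \<in> pb i, each block is all of A, contradicting
  card (pb i) < L \<le> card A.\<close>

type_synonym 'a config = "('a \<Rightarrow> 'a set) \<times> ('a \<times> 'a set) multiset"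

definition deliver :: "'a \<Rightarrow> 'a set \<Rightarrow> 'a config \<Rightarrow> 'a config" where
  "deliver k P c = (fst (receive k P (fst c)), (snd c - {#(k, P)#}) + snd (receive k P (fst c)))"

lemma msg_step_iff_deliver: "msg_step c c' \<longleftrightarrow> (\<exists>k P. (k, P) \<in># snd c \<and> c' = deliver k P c)"
  unfolding msg_step_def deliver_def ..

lemma receive_cong:
  assumes "pb k = pb' k"
  shows "fst (receive k P pb) k = fst (receive k P pb') k"
    and "snd (receive k P pb) = snd (receive k P pb')"
  using assms by (simp_all add: receive_def)

lemma receive_block_grows:
  "fst (receive k P pb) i = pb i \<or> card (pb i - {i}) < card (fst (receive k P pb) i - {i})"
  by (auto simp: receive_def)

lemma msg_steps_block_grows:
  assumes "msg_step\<^sup>*\<^sup>* c c'"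
  shows "fst c' i = fst c i \<or> card (fst c i - {i}) < card (fst c' i - {i})"
  using assms
proof (induction rule: rtranclp_induct)
  case (step c1 c2)
  obtain k P where "fst c2 = fst (receive k P (fst c1))"
    using step.hyps(2) by (auto simp: msg_step_iff_deliver deliver_def)
  then have "fst c2 i = fst c1 i \<or> card (fst c1 i - {i}) < card (fst c2 i - {i})"
    using receive_block_grows[of k P "fst c1" i] by simp
  with step.IH show ?case
    by (elim disjE) auto
qed simp

lemma msg_steps_block_fixed:
  assumes "msg_step\<^sup>*\<^sup>* c0 c" "msg_step\<^sup>*\<^sup>* c c'"
    and "card (fst c' i - {i}) \<le> card (fst c0 i - {i})"
  shows "fst c i = fst c0 i"
proof (rule ccontr)
  assume "fst c i \<noteq> fst c0 i"
  with msg_steps_block_grows[OF assms(1), of i]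
  have "card (fst c0 i - {i}) < card (fst c i - {i})"
    by blast
  moreover have "card (fst c i - {i}) \<le> card (fst c' i - {i})"
    using msg_steps_block_grows[OF assms(2), of i] by (elim disjE) simp_all
  ultimately show False
    using assms(3) by linarith
qed

definition confined :: "'a set \<Rightarrow> 'a config \<Rightarrow> bool" where
  "confined A c \<longleftrightarrow> (\<forall>i\<in>A. fst c i \<subseteq> A) \<and> set_mset (snd c) \<subseteq> A \<times> Pow A"

lemma msg_step_confined:
  assumes "finite A" "confined A c" "msg_step c c'"
  shows "confined A c'"
proof -
  obtain k P where kP: "(k, P) \<in># snd c" and c': "c' = deliver k P c"
    using assms(3) by (auto simp: msg_step_iff_deliver)
  have blocks: "\<forall>i\<in>A. fst c i \<subseteq> A" and msgs: "set_mset (snd c) \<subseteq> A \<times> Pow A"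
    using assms(2) by (simp_all add: confined_def)
  with kP have "k \<in> A" "P \<subseteq> A"
    by auto
  then have "finite (P - fst c k)"
    using assms(1) finite_subset by blast
  then have "set_mset (snd (receive k P (fst c))) \<subseteq> A \<times> Pow A"
    using \<open>k \<in> A\<close> \<open>P \<subseteq> A\<close> blocks by (auto simp: receive_def)
  moreover have "\<forall>i\<in>A. fst (receive k P (fst c)) i \<subseteq> A"
    using \<open>P \<subseteq> A\<close> blocks by (simp add: receive_def)
  moreover have "set_mset (snd c - {#(k, P)#}) \<subseteq> A \<times> Pow A"
    using msgs by (meson in_diffD subset_eq)
  ultimately show ?thesis
    by (simp add: c' confined_def deliver_def)
qed

lemma msg_steps_confined:
  assumes "finite A" "msg_step\<^sup>*\<^sup>* c c'" "confined A c"
  shows "confined A c'"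
  using assms(2,3) by (induction rule: rtranclp_induct) (auto intro: msg_step_confined[OF assms(1)])

lemma set_mset_C2_msgs:
  assumes "finite A" "E \<subseteq> A \<times> A"
  shows "set_mset (C2_msgs A E pb) = {(j, pb i) | i j. (i, j) \<in> E}"
proof -
  have "finite (neighbours E i)" if "i \<in> A" for i
    using assms by (auto simp: neighbours_def intro: finite_subset)
  then show ?thesis
    using assms(2) by (auto simp: C2_msgs_def set_mset_sum[OF assms(1)] neighbours_def)
qed

lemma epoch_start_confined:
  assumes "finite A" "E \<subseteq> A \<times> A" "\<forall>i\<in>A. pb i \<subseteq> A"
  shows "confined A (after_C1 A pb, C2_msgs A E (after_C1 A pb))"
  using assms by (auto simp: confined_def after_C1_def set_mset_C2_msgs)

lemma execution_confined:
  assumes "finite A" "E \<subseteq> A \<times> A" "execution A E pbs" "i \<in> A"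
  shows "pbs t i \<subseteq> A"
  using assms(4)
proof (induction t arbitrary: i)
  case 0
  then show ?case using assms(3) by (simp add: execution_def)
next
  case (Suc t)
  have "epoch A E (pbs t) (pbs (Suc t))"
    using assms(3) by (simp add: execution_def)
  then have "confined A (pbs (Suc t), {#})"
    using msg_steps_confined[OF assms(1)] epoch_start_confined[OF assms(1,2)] Suc.IH
    unfolding epoch_def by blast
  then show ?case using Suc.prems by (simp add: confined_def)
qed

lemma pending_msg_delivered:
  assumes "msg_step\<^sup>*\<^sup>* c c'" "snd c' = {#}" "(k, P) \<in># snd c"
  shows "\<exists>c1. msg_step\<^sup>*\<^sup>* c c1 \<and> (k, P) \<in># snd c1 \<and> msg_step\<^sup>*\<^sup>* (deliver k P c1) c'"
  using assms
proof (induction arbitrary: k P rule: converse_rtranclp_induct)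
  case base
  then show ?case by simp
next
  case (step c c2)
  then obtain k' P' where "(k', P') \<in># snd c" and c2: "c2 = deliver k' P' c"
    by (auto simp: msg_step_iff_deliver)
  show ?case
  proof (cases "(k, P) = (k', P')")
    case True
    then show ?thesis
      using step.hyps(2) step.prems(2) c2 by blast
  next
    case False
    then have "(k, P) \<in># snd c2"
      using step.prems(2) by (auto simp: c2 deliver_def in_diff_count)
    then obtain c1 where "msg_step\<^sup>*\<^sup>* c2 c1" "(k, P) \<in># snd c1" "msg_step\<^sup>*\<^sup>* (deliver k P c1) c'"
      using step.IH step.prems(1) by blast
    then show ?thesis
      using step.hyps(1) by (meson converse_rtranclp_into_rtranclp)
  qed
qed

definition absorbs :: "('a \<Rightarrow> 'a set) \<Rightarrow> ('a \<times> 'a set) set \<Rightarrow> bool" where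
  "absorbs S M \<longleftrightarrow>
     (\<forall>(k, P)\<in>M. fst (receive k P S) k = S k \<and> set_mset (snd (receive k P S)) \<subseteq> M)"

lemma absorbs_no_growth:
  assumes "absorbs S M" "(k, P) \<in> M"
  shows "card (P - {k}) \<le> card (S k - {k})"
proof (rule ccontr)
  assume "\<not> ?thesis"
  then have "fst (receive k P S) k = P" and "P \<noteq> S k"
    by (auto simp: receive_def)
  with assms show False
    by (auto simp: absorbs_def)
qed

lemma absorbs_forward:
  assumes "absorbs S M" "(k, P) \<in> M" "finite P"
    and "card (P - {k}) = card (S k - {k})" "x \<in> P" "x \<notin> S k"
  shows "(x, S k) \<in> M"
proof -
  have "snd (receive k P S) = image_mset (\<lambda>x. (x, S k)) (mset_set (P - S k))"
    using assms(4-6) by (auto simp: receive_def)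
  moreover have "(x, S k) \<in># image_mset (\<lambda>x. (x, S k)) (mset_set (P - S k))"
    using assms(3,5,6) by simp
  ultimately have "(x, S k) \<in># snd (receive k P S)"
    by simp
  then show ?thesis
    using assms(1,2) by (auto simp: absorbs_def)
qed

lemma connected_undirected_const:
  assumes "connected_undirected A E" "\<And>i j. (i, j) \<in> E \<Longrightarrow> f i = f j" "i \<in> A" "j \<in> A"
  shows "f i = f j"
proof -
  have "(i, j) \<in> E\<^sup>*"
    using assms(1,3,4) by (simp add: connected_undirected_def)
  then show ?thesis
    by (induction rule: rtrancl_induct) (simp_all add: assms(2))
qed

lemma absorbs_card_lt:
  assumes "absorbs S M" "(k, P) \<in> M" "k \<in> S k" "finite (S k)"
  shows "card (P - {k}) < card (S k)"
proof -
  have "card (S k - {k}) < card (S k)"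
    using card_Diff1_less[OF assms(4,3)] .
  then show ?thesis
    using absorbs_no_growth[OF assms(1,2)] by linarith
qed

lemma absorbed_card_const:
  assumes fin: "finite A" and conn: "connected_undirected A E"
    and S: "\<And>i. i \<in> A \<Longrightarrow> i \<in> S i \<and> S i \<subseteq> A"
    and C2: "\<And>i j. (i, j) \<in> E \<Longrightarrow> (j, S i) \<in> M"
    and absorbs: "absorbs S M"
    and "i \<in> A" "j \<in> A"
  shows "card (S i) = card (S j)"
proof -
  have EA: "E \<subseteq> A \<times> A" and "sym E"
    using conn by (simp_all add: connected_undirected_def)
  have card_le: "card (S i) \<le> card (S j)" if "(i, j) \<in> E" for i j
  proof -
    have "j \<in> A"
      using that EA by blast
    then have "j \<in> S j" "finite (S j)"
      using S[OF \<open>j \<in> A\<close>] rev_finite_subset[OF fin] by simp_all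
    then have "card (S i - {j}) < card (S j)"
      by (rule absorbs_card_lt[OF absorbs C2[OF that]])
    moreover have "card (S i) - 1 \<le> card (S i - {j})"
      using diff_card_le_card_Diff[of "{j}" "S i"] by simp
    ultimately show ?thesis
      by linarith
  qed
  have card_edge: "card (S i) = card (S j)" if "(i, j) \<in> E" for i j
  proof -
    have "(j, i) \<in> E"
      using \<open>sym E\<close> that by (rule symD)
    with that show ?thesis
      by (intro antisym card_le)
  qed
  show ?thesis
    using connected_undirected_const[OF conn card_edge assms(6,7)] .
qed

lemma absorbed_blocks_complete:
  assumes fin: "finite A" and conn: "connected_undirected A E"
    and S: "\<And>i. i \<in> A \<Longrightarrow> i \<in> S i \<and> S i \<subseteq> A"
    and M: "M \<subseteq> A \<times> Pow A" and C2: "\<And>i j. (i, j) \<in> E \<Longrightarrow> (j, S i) \<in> M"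
    and absorbs: "absorbs S M"
    and "i \<in> A"
  shows "S i = A"
proof -
  have EA: "E \<subseteq> A \<times> A"
    using conn by (simp add: connected_undirected_def)
  have finS: "finite (S k)" if "k \<in> A" for k
    using S[OF that] rev_finite_subset[OF fin] by simp
  have card_eq: "card (S i) = card (S j)" if "i \<in> A" "j \<in> A" for i j
    using absorbed_card_const[OF fin conn S C2 absorbs that] .
  have card_lt: "card (P - {k}) < card (S k)" if "(k, P) \<in> M" for k P
  proof -
    have "k \<in> A"
      using M that by blast
    with S finS show ?thesis
      by (blast intro: absorbs_card_lt[OF absorbs that])
  qed
  have edge_in_block: "j \<in> S i" if "(i, j) \<in> E" for i j
  proof (rule ccontr)
    assume "j \<notin> S i"
    then have "card (S i) < card (S j)"
      using card_lt[OF C2[OF that]] by simp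
    moreover have "card (S i) = card (S j)"
      using card_eq that EA by blast
    ultimately show False
      by simp
  qed
  have edge_eq: "S i = S j" if "(i, j) \<in> E" for i j
  proof (rule ccontr)
    assume "S i \<noteq> S j"
    have ij: "i \<in> A" "j \<in> A"
      using that EA by auto
    then have "\<not> S i \<subseteq> S j"
      using card_subset_eq[OF finS[OF ij(2)] _ card_eq[OF ij]] \<open>S i \<noteq> S j\<close> by blast
    then obtain x where x: "x \<in> S i" "x \<notin> S j"
      by blast
    have "card (S i - {j}) = card (S j - {j})"
      using edge_in_block[OF that] S[OF ij(2)] finS ij card_eq[OF ij] by simp
    then have "(x, S j) \<in> M"
      using absorbs_forward[OF absorbs C2[OF that] finS[OF ij(1)]] x by blast
    then have "x \<in> A" and "card (S j - {x}) < card (S x)"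
      using M card_lt by blast+
    moreover have "S j - {x} = S j"
      using x(2) by blast
    ultimately show False
      using card_eq[OF ij(2)] by fastforce
  qed
  have "j \<in> S i" if "j \<in> A" for j
  proof -
    have "S j = S i"
      using connected_undirected_const[OF conn edge_eq that \<open>i \<in> A\<close>] .
    then show ?thesis
      using S[OF that] by blast
  qed
  then show ?thesis
    using S[OF \<open>i \<in> A\<close>] by blast
qed

definition pending_on_run :: "'a config \<Rightarrow> 'a config \<Rightarrow> ('a \<times> 'a set) set" where
  "pending_on_run c0 cf = {m. \<exists>c. msg_step\<^sup>*\<^sup>* c0 c \<and> msg_step\<^sup>*\<^sup>* c cf \<and> m \<in># snd c}"

lemma pending_on_run_absorbed:
  assumes run: "msg_step\<^sup>*\<^sup>* c0 cf" "snd cf = {#}"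
    and fixed: "\<And>c k. msg_step\<^sup>*\<^sup>* c0 c \<Longrightarrow> msg_step\<^sup>*\<^sup>* c cf \<Longrightarrow> k \<in> A \<Longrightarrow> fst c k = S k"
    and recipients: "\<And>k P. (k, P) \<in> pending_on_run c0 cf \<Longrightarrow> k \<in> A"
  shows "absorbs S (pending_on_run c0 cf)"
  unfolding absorbs_def
proof (clarify)
  fix k P
  assume pending: "(k, P) \<in> pending_on_run c0 cf"
  then obtain c where c: "msg_step\<^sup>*\<^sup>* c0 c" "msg_step\<^sup>*\<^sup>* c cf" "(k, P) \<in># snd c"
    unfolding pending_on_run_def by blast
  obtain c1 where c1: "msg_step\<^sup>*\<^sup>* c c1" "(k, P) \<in># snd c1" "msg_step\<^sup>*\<^sup>* (deliver k P c1) cf"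
    using pending_msg_delivered[OF c(2) run(2) c(3)] by blast
  define c2 where "c2 = deliver k P c1"
  have step: "msg_step c1 c2"
    unfolding msg_step_iff_deliver c2_def using c1(2) by blast
  have run1: "msg_step\<^sup>*\<^sup>* c0 c1" "msg_step\<^sup>*\<^sup>* c1 cf"
    using rtranclp_trans[OF c(1) c1(1)] converse_rtranclp_into_rtranclp[OF step c1(3)[folded c2_def]] .
  have run2: "msg_step\<^sup>*\<^sup>* c0 c2" "msg_step\<^sup>*\<^sup>* c2 cf"
    using rtranclp.rtrancl_into_rtrancl[OF run1(1) step] c1(3)[folded c2_def] .
  have "k \<in> A"
    using recipients pending .
  then have "fst c1 k = S k" "fst c2 k = S k"
    using fixed run1 run2 by blast+
  then have "fst (receive k P S) k = S k" and out: "snd (receive k P S) = snd (receive k P (fst c1))"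
    using receive_cong[of S k "fst c1" P] by (simp_all add: c2_def deliver_def)
  moreover have "set_mset (snd (receive k P S)) \<subseteq> set_mset (snd c2)"
    by (simp add: out c2_def deliver_def)
  then have "set_mset (snd (receive k P S)) \<subseteq> pending_on_run c0 cf"
    using run2 unfolding pending_on_run_def by blast
  ultimately show "fst (receive k P S) k = S k \<and> set_mset (snd (receive k P S)) \<subseteq> pending_on_run c0 cf"
    by blast
qed

lemma stalled_epoch_blocks_complete:
  assumes fin: "finite A" and conn: "connected_undirected A E"
    and within: "\<forall>i\<in>A. pb i \<subseteq> A" and epoch: "epoch A E pb pb'"
    and stalled: "\<forall>i\<in>A. pb' i = pb i" and "i \<in> A"
  shows "pb i = A"
proof -
  define S where "S = after_C1 A pb"
  define c0 where "c0 = (S, C2_msgs A E S)"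
  define cf where "cf = (pb', {#} :: ('a \<times> 'a set) multiset)"
  have EA: "E \<subseteq> A \<times> A"
    using conn by (simp add: connected_undirected_def)
  have run: "msg_step\<^sup>*\<^sup>* c0 cf"
    using epoch by (simp add: epoch_def c0_def cf_def S_def)
  have S_props: "k \<in> S k \<and> S k \<subseteq> A" if "k \<in> A" for k
    using within that by (auto simp: S_def after_C1_def)
  have fixed: "fst c k = S k" if "msg_step\<^sup>*\<^sup>* c0 c" "msg_step\<^sup>*\<^sup>* c cf" "k \<in> A" for c k
  proof -
    have "S k - {k} = pb k - {k}"
      by (auto simp: S_def after_C1_def)
    then have "card (fst cf k - {k}) \<le> card (fst c0 k - {k})"
      using stalled that(3) by (simp add: c0_def cf_def)
    then show ?thesis
      using msg_steps_block_fixed[OF that(1,2)] by (simp add: c0_def)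
  qed
  have "set_mset (snd c) \<subseteq> A \<times> Pow A" if "msg_step\<^sup>*\<^sup>* c0 c" for c
    using msg_steps_confined[OF fin that] epoch_start_confined[OF fin EA within]
    by (simp add: c0_def S_def confined_def)
  then have pending: "pending_on_run c0 cf \<subseteq> A \<times> Pow A"
    unfolding pending_on_run_def by blast
  have C2: "(j, S i) \<in> pending_on_run c0 cf" if "(i, j) \<in> E" for i j
  proof -
    have "(j, S i) \<in># snd c0"
      using that set_mset_C2_msgs[OF fin EA, of S] by (auto simp: c0_def)
    then show ?thesis
      using run unfolding pending_on_run_def by blast
  qed
  have "absorbs S (pending_on_run c0 cf)"
    using pending_on_run_absorbed[OF run _ fixed] pending by (auto simp: cf_def)
  then have "S i = A"
    using absorbed_blocks_complete[OF fin conn S_props pending C2] \<open>i \<in> A\<close> by blast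
  moreover have "S i = pb i"
    using fixed[OF run rtranclp.rtrancl_refl \<open>i \<in> A\<close>] stalled \<open>i \<in> A\<close> by (simp add: cf_def)
  ultimately show ?thesis
    by simp
qed

theorem corollary1:
  fixes A :: "'a set" and E :: "('a \<times> 'a) set" and L :: nat
    and pbs :: "nat \<Rightarrow> 'a \<Rightarrow> 'a set"
  assumes "finite A"
    and "connected_undirected A E"
    and "1 \<le> L" and "L \<le> card A"
    and "execution A E pbs"
  shows "\<forall>t. \<not> deadlock A L pbs t"
proof (intro allI notI)
  fix t
  assume "deadlock A L pbs t"
  then have stalled: "\<forall>i\<in>A. pbs (Suc t) i = pbs t i" and small: "\<forall>i\<in>A. card (pbs t i) < L"
    by (auto simp: deadlock_def D_def)
  obtain i where "i \<in> A"
    using assms(3,4) by fastforce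
  have EA: "E \<subseteq> A \<times> A"
    using assms(2) by (simp add: connected_undirected_def)
  have "\<forall>i\<in>A. pbs t i \<subseteq> A" "epoch A E (pbs t) (pbs (Suc t))"
    using execution_confined[OF assms(1) EA assms(5)] assms(5) by (auto simp: execution_def)
  then have "pbs t i = A"
    using stalled_epoch_blocks_complete[OF assms(1,2)] stalled \<open>i \<in> A\<close> by blast
  then show False
    using small \<open>i \<in> A\<close> assms(4) by auto
qed

end
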